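(* Let $H_1\in\mathbb{F}_2^{r_1\times n_1}$ and $H_2\in\mathbb{F}_2^{r_2\times n_2}$ be arbitrary binary matrices (rows may be linearly dependent), and let $\mathcal{Q}$ be the hypergraph product code of $H_1$ and $H_2$ on $n=n_1n_2+r_1r_2$ qubits, with $X$-check matrix $H_X=\big(H_1\otimes I_{n_2}\ \big|\ I_{r_1}\otimes H_2^T\big)$ and $Z$-check matrix $H_Z=\big(I_{n_1}\otimes H_2\ \big|\ H_1^T\otimes I_{r_2}\big)$. Let $d$ be the distance of $\mathcal{Q}$. Suppose every row of $H_Z$ and of $H_X$ is measured with its own ancilla qubit by a sequence of two-qubit gates applied in an arbitrary order to the qubits in its support. Then, for every choice of these orders, the effective distance of $\mathcal{Q}$ is also $d$.
   Context: Vectors in $\mathbb{F}_2^{n}$ are indexed so that the first $n_1n_2$ coordinates correspond to "bit-type" qubits (indexed by pairs of a column of $H_1$ and a column of $H_2$) and the last $r_1r_2$ to "check-type" qubits (indexed by pairs of a row of $H_1$ and a row of $H_2$). Each row of $H_X$ (resp. $H_Z$) defines an $X$-type (resp. $Z$-type) stabilizer generator acting as $X$ (resp. $Z$) on the qubits where the row is $1$; these commute since $H_XH_Z^T=0$. The distance $d$ is the minimum Hamming weight of a vector in $\big(\ker H_X\setminus \mathrm{Im}\,H_Z^T\big)\cup\big(\ker H_Z\setminus \mathrm{Im}\,H_X^T\big)$ (i.e. of a nontrivial logical $Z$ or $X$ operator), with $d=\infty$ if this set is empty. Fault model: a fault is either (i) a single-qubit Pauli error on a data qubit, or (ii) an error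 on the ancilla during the measurement of one stabilizer generator, which propagates to the data qubits: an ancilla error during the measurement of a $Z$-type (resp. $X$-type) generator with support $S$ produces a $Z$ (resp. $X$) error on a subset of $S$ (the possible subsets depend on the gate order; the analysis allows any subset of $S$). A $Y$ error on an ancilla propagates as either an $X$- or a $Z$-type error, so it is covered by (ii). The resulting data-qubit error is the product of the errors produced by all faults. The effective distance (for the given code and measurement circuits) is the minimum number of faults whose resulting data-qubit error is an undetectable logical error, i.e. its $X$-part lies in $\ker H_Z\setminus\mathrm{Im}\,H_X^T$ or its $Z$-part lies in $\ker H_X\setminus\mathrm{Im}\,H_Z^T$, while it commutes with all stabilizers. *)

theory Defs
  imports Main "HOL-Library.Extended_Nat"
begin

text \<open>Binary matrices H :: nat => nat => bool, H i j = True iff entry (i,j) is 1,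
  with explicit dimensions. Binary vectors over F_2 are represented by their supports
  (sets of qubits); addition is symmetric difference, Hamming weight is card.\<close>

type_synonym qubit = "(nat \<times> nat) + (nat \<times> nat)"

definition symd :: "'a set \<Rightarrow> 'a set \<Rightarrow> 'a set" where
  "symd A B = (A - B) \<union> (B - A)"

inductive_set f2_span :: "'a set set \<Rightarrow> 'a set set" for G where
  span_zero: "{} \<in> f2_span G"
| span_add: "s \<in> G \<Longrightarrow> v \<in> f2_span G \<Longrightarrow> symd s v \<in> f2_span G"

text \<open>Qubits: bit-type Inl (i,j), i<n1 column of H1, j<n2 column of H2;
  check-type Inr (a,b), a<r1 row of H1, b<r2 row of H2.\<close>
definition hgp_qubits :: "nat \<Rightarrow> nat \<Rightarrow> nat \<Rightarrow> nat \<Rightarrow> qubit set" where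
  "hgp_qubits r1 n1 r2 n2 = Inl ` ({..<n1} \<times> {..<n2}) \<union> Inr ` ({..<r1} \<times> {..<r2})"

text \<open>Rows of H_X = (H1 (x) I_n2 | I_r1 (x) H2^T), indexed by (a,j), a<r1, j<n2.\<close>
definition hgp_X_rows :: "nat \<Rightarrow> nat \<Rightarrow> (nat \<times> nat) set" where
  "hgp_X_rows r1 n2 = {..<r1} \<times> {..<n2}"

definition hgp_X_row :: "(nat \<Rightarrow> nat \<Rightarrow> bool) \<Rightarrow> (nat \<Rightarrow> nat \<Rightarrow> bool)
    \<Rightarrow> nat \<Rightarrow> nat \<Rightarrow> nat \<times> nat \<Rightarrow> qubit set" where
  "hgp_X_row H1 H2 n1 r2 = (\<lambda>(a, j).
     {Inl (i, j) | i. i < n1 \<and> H1 a i} \<union> {Inr (a, b) | b. b < r2 \<and> H2 b j})"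

text \<open>Rows of H_Z = (I_n1 (x) H2 | H1^T (x) I_r2), indexed by (i,b), i<n1, b<r2.\<close>
definition hgp_Z_rows :: "nat \<Rightarrow> nat \<Rightarrow> (nat \<times> nat) set" where
  "hgp_Z_rows n1 r2 = {..<n1} \<times> {..<r2}"

definition hgp_Z_row :: "(nat \<Rightarrow> nat \<Rightarrow> bool) \<Rightarrow> (nat \<Rightarrow> nat \<Rightarrow> bool)
    \<Rightarrow> nat \<Rightarrow> nat \<Rightarrow> nat \<times> nat \<Rightarrow> qubit set" where
  "hgp_Z_row H1 H2 r1 n2 = (\<lambda>(i, b).
     {Inl (i, j) | j. j < n2 \<and> H2 b j} \<union> {Inr (a, b) | a. a < r1 \<and> H1 a i})"

definition f2_kernel :: "'q set \<Rightarrow> 'i set \<Rightarrow> ('i \<Rightarrow> 'q set) \<Rightarrow> 'q set set" where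
  "f2_kernel Q I row = {v. v \<subseteq> Q \<and> (\<forall>r\<in>I. even (card (v \<inter> row r)))}"

definition ker_HX where
  "ker_HX H1 H2 r1 n1 r2 n2 =
     f2_kernel (hgp_qubits r1 n1 r2 n2) (hgp_X_rows r1 n2) (hgp_X_row H1 H2 n1 r2)"
definition ker_HZ where
  "ker_HZ H1 H2 r1 n1 r2 n2 =
     f2_kernel (hgp_qubits r1 n1 r2 n2) (hgp_Z_rows n1 r2) (hgp_Z_row H1 H2 r1 n2)"
definition im_HXT where
  "im_HXT H1 H2 r1 n1 r2 n2 = f2_span (hgp_X_row H1 H2 n1 r2 ` hgp_X_rows r1 n2)"
definition im_HZT where
  "im_HZT H1 H2 r1 n1 r2 n2 = f2_span (hgp_Z_row H1 H2 r1 n2 ` hgp_Z_rows n1 r2)"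

definition hgp_logicals where
  "hgp_logicals H1 H2 r1 n1 r2 n2 =
     (ker_HX H1 H2 r1 n1 r2 n2 - im_HZT H1 H2 r1 n1 r2 n2)
   \<union> (ker_HZ H1 H2 r1 n1 r2 n2 - im_HXT H1 H2 r1 n1 r2 n2)"

text \<open>Distance (infinity if there are no nontrivial logicals).\<close>
definition hgp_distance :: "(nat \<Rightarrow> nat \<Rightarrow> bool) \<Rightarrow> (nat \<Rightarrow> nat \<Rightarrow> bool)
    \<Rightarrow> nat \<Rightarrow> nat \<Rightarrow> nat \<Rightarrow> nat \<Rightarrow> enat" where
  "hgp_distance H1 H2 r1 n1 r2 n2 =
     (INF v \<in> hgp_logicals H1 H2 r1 n1 r2 n2. enat (card v))"

text \<open>Measurement circuits: for every generator a gate order, i.e. a list enumerating its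
  support without repetition.\<close>
definition valid_orders where
  "valid_orders H1 H2 r1 n1 r2 n2 ordX ordZ \<longleftrightarrow>
     (\<forall>r\<in>hgp_X_rows r1 n2. distinct (ordX r) \<and> set (ordX r) = hgp_X_row H1 H2 n1 r2 r)
   \<and> (\<forall>r\<in>hgp_Z_rows n1 r2. distinct (ordZ r) \<and> set (ordZ r) = hgp_Z_row H1 H2 r1 n2 r)"

text \<open>Effect (X-part, Z-part) of a single fault: a single-qubit Pauli X, Z or Y on a data
  qubit, or an ancilla error during the measurement of a generator, which propagates to
  the qubits whose gates come after the fault in the gate order (a suffix of the order).\<close>
definition single_faults where
  "single_faults H1 H2 r1 n1 r2 n2 ordX ordZ =
     {({q}, {}) | q. q \<in> hgp_qubits r1 n1 r2 n2}
   \<union> {({}, {q}) | q. q \<in> hgp_qubits r1 n1 r2 n2}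
   \<union> {({q}, {q}) | q. q \<in> hgp_qubits r1 n1 r2 n2}
   \<union> {(set (drop k (ordX r)), {}) | r k. r \<in> hgp_X_rows r1 n2}
   \<union> {({}, set (drop k (ordZ r))) | r k. r \<in> hgp_Z_rows n1 r2}"

definition pauli_mult :: "'q set \<times> 'q set \<Rightarrow> 'q set \<times> 'q set \<Rightarrow> 'q set \<times> 'q set" where
  "pauli_mult e f = (symd (fst e) (fst f), symd (snd e) (snd f))"

definition fault_error :: "('q set \<times> 'q set) list \<Rightarrow> 'q set \<times> 'q set" where
  "fault_error fs = foldr pauli_mult fs ({}, {})"

definition undetectable_logical where
  "undetectable_logical H1 H2 r1 n1 r2 n2 e \<longleftrightarrow>
     fst e \<in> ker_HZ H1 H2 r1 n1 r2 n2 \<and> snd e \<in> ker_HX H1 H2 r1 n1 r2 n2 \<and>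
     (fst e \<notin> im_HXT H1 H2 r1 n1 r2 n2 \<or> snd e \<notin> im_HZT H1 H2 r1 n1 r2 n2)"

definition effective_distance where
  "effective_distance H1 H2 r1 n1 r2 n2 ordX ordZ =
     (INF fs \<in> {fs. set fs \<subseteq> single_faults H1 H2 r1 n1 r2 n2 ordX ordZ
                  \<and> undetectable_logical H1 H2 r1 n1 r2 n2 (fault_error fs)}.
        enat (length fs))"

end

theory Submission
  imports Defs
begin

text \<open>
  A minimum-weight nontrivial logical operator is the error of as many single-qubit faults,
  so only the lower bound needs an argument, and by transposing \<open>H\<^sub>1\<close> and \<open>H\<^sub>2\<close>
  (which exchanges \<open>H\<^sub>X\<close> and \<open>H\<^sub>Z\<close>) it suffices to bound the \<open>X\<close>-part \<open>e\<close> of the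
  error. It is a sum of \<open>m\<close> pieces, each a single qubit or part of the support of one
  \<open>X\<close>-check. If \<open>e \<in> ker H\<^sub>Z - im H\<^sub>X\<^sup>T\<close>, a Kunneth-type argument shows that \<open>e\<close> is
  detected by a product vector \<open>u \<otimes> \<delta>\<^sub>j\<close> with \<open>u \<in> ker H\<^sub>1\<close> or \<open>\<delta>\<^sub>a \<otimes> w\<close> with
  \<open>w \<in> ker H\<^sub>2\<^sup>T\<close>. In the first case, writing \<open>E\<close> for the bit-type part of \<open>e\<close>,
  \<open>\<delta>\<^sub>i \<otimes> u\<^sup>T E\<close> (any \<open>i \<in> u\<close>) is a nontrivial logical operator of weight \<open>|u\<^sup>T E|\<close>,
  and each piece changes \<open>u\<^sup>T E\<close> in at most one entry, because an \<open>X\<close>-check meets a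
  single column of bit-type qubits; the second case is the same with rows of check-type
  qubits. Hence \<open>d \<le> m\<close>.
\<close>

section \<open>Linear algebra over \<open>F\<^sub>2\<close> with vectors as sets\<close>

lemma symd_iff [simp]: "x \<in> symd A B \<longleftrightarrow> (x \<in> A) \<noteq> (x \<in> B)"
  by (auto simp: symd_def)

lemma symd_empty [simp]: "symd {} A = A" "symd A {} = A"
  by (auto simp: symd_def)

lemma finite_symd [simp]: "finite A \<Longrightarrow> finite B \<Longrightarrow> finite (symd A B)"
  by (auto simp: symd_def)

lemma symd_Int_distrib: "symd A B \<inter> C = symd (A \<inter> C) (B \<inter> C)"
  by auto

lemma image_symd: "inj f \<Longrightarrow> f ` symd A B = symd (f ` A) (f ` B)"
  by (simp add: symd_def image_Un image_set_diff)

lemma card_symd_le: "finite A \<Longrightarrow> finite B \<Longrightarrow> card (symd A B) \<le> card A + card B"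
  unfolding symd_def by (meson Diff_subset card_Un_le card_mono order_trans add_mono)

lemma odd_card_symd:
  assumes "finite A" "finite B"
  shows "odd (card (symd A B)) \<longleftrightarrow> odd (card A) \<noteq> odd (card B)"
proof -
  have "card (A \<union> B) = card (symd A B) + card (A \<inter> B)"
    using assms by (subst card_Un_disjoint[symmetric]) (auto intro: arg_cong[where f = card])
  then have "card (symd A B) + 2 * card (A \<inter> B) = card A + card B"
    using assms card_Un_Int[of A B] by simp
  then show ?thesis by presburger
qed

lemma odd_card_symd_Int:
  "finite C \<Longrightarrow> odd (card (symd A B \<inter> C)) \<longleftrightarrow> odd (card (A \<inter> C)) \<noteq> odd (card (B \<inter> C))"
  unfolding symd_Int_distrib by (rule odd_card_symd) simp_all

lemma odd_card_Int_symd: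
  "finite C \<Longrightarrow> odd (card (C \<inter> symd A B)) \<longleftrightarrow> odd (card (C \<inter> A)) \<noteq> odd (card (C \<inter> B))"
  using odd_card_symd_Int[of C A B] by (simp add: Int_commute)

lemma odd_card_odd_card_swap:
  assumes "finite A" "finite B"
  shows "odd (card {a\<in>A. odd (card {b\<in>B. R a b})}) \<longleftrightarrow> odd (card {b\<in>B. odd (card {a\<in>A. R a b})})"
proof -
  have "card {b\<in>B. R a b} = (\<Sum>b\<in>B. if R a b then 1 else 0)" for a
    using assms(2) by (subst sum.inter_filter[symmetric]) auto
  moreover have "card {a\<in>A. R a b} = (\<Sum>a\<in>A. if R a b then 1 else 0)" for b
    using assms(1) by (subst sum.inter_filter[symmetric]) auto
  ultimately have "(\<Sum>a\<in>A. card {b\<in>B. R a b}) = (\<Sum>b\<in>B. card {a\<in>A. R a b})"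
    using sum.swap by simp
  then show ?thesis
    using even_sum_iff[OF assms(1), of "\<lambda>a. card {b\<in>B. R a b}"]
      even_sum_iff[OF assms(2), of "\<lambda>b. card {a\<in>A. R a b}"] by simp
qed

lemma even_card_odd_card_transfer:
  assumes "finite A" "finite B" "finite C"
    and "\<And>a. a \<in> A \<Longrightarrow> odd (card {b\<in>B. P a b}) \<longleftrightarrow> odd (card {c\<in>C. Q a c})"
    and "\<And>c. c \<in> C \<Longrightarrow> even (card {a\<in>A. Q a c})"
  shows "even (card {b\<in>B. odd (card {a\<in>A. P a b})})"
proof -
  have "odd (card {b\<in>B. odd (card {a\<in>A. P a b})}) \<longleftrightarrow> odd (card {a\<in>A. odd (card {b\<in>B. P a b})})"
    using odd_card_odd_card_swap[OF assms(1,2)] by simp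
  also have "{a\<in>A. odd (card {b\<in>B. P a b})} = {a\<in>A. odd (card {c\<in>C. Q a c})}"
    using assms(4) by blast
  also have "odd (card \<dots>) \<longleftrightarrow> odd (card {c\<in>C. odd (card {a\<in>A. Q a c})})"
    by (rule odd_card_odd_card_swap[OF assms(1,3)])
  also have "{c\<in>C. odd (card {a\<in>A. Q a c})} = {}"
    using assms(5) by blast
  finally show ?thesis by simp
qed

definition xsum :: "('i \<Rightarrow> 'a set) \<Rightarrow> 'i set \<Rightarrow> 'a set" where
  "xsum f T = {x. odd (card {t\<in>T. x \<in> f t})}"

lemma mem_xsum_iff: "x \<in> xsum f T \<longleftrightarrow> odd (card {t\<in>T. x \<in> f t})"
  by (simp add: xsum_def)

lemma xsum_empty [simp]: "xsum f {} = {}"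
  by (simp add: xsum_def)

lemma xsum_insert:
  assumes "finite T" "t \<notin> T"
  shows "xsum f (insert t T) = symd (f t) (xsum f T)"
proof -
  have "{s \<in> insert t T. x \<in> f s} = (if x \<in> f t then insert t {s\<in>T. x \<in> f s} else {s\<in>T. x \<in> f s})" for x
    by auto
  then show ?thesis using assms by (auto simp: xsum_def)
qed

lemma xsum_singleton [simp]: "xsum f {t} = f t"
  using xsum_insert[of "{}" t f] by simp

lemma xsum_symd_index:
  assumes "finite S" "finite T"
  shows "xsum f (symd S T) = symd (xsum f S) (xsum f T)"
proof (rule set_eqI)
  fix x
  have "{s \<in> symd S T. x \<in> f s} = symd {s\<in>S. x \<in> f s} {s\<in>T. x \<in> f s}"
    by auto
  moreover have "finite {s\<in>S. x \<in> f s}" "finite {s\<in>T. x \<in> f s}"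
    using assms by simp_all
  ultimately show "x \<in> xsum f (symd S T) \<longleftrightarrow> x \<in> symd (xsum f S) (xsum f T)"
    unfolding xsum_def mem_Collect_eq by (simp add: odd_card_symd)
qed

lemma xsum_subset:
  assumes "\<And>t. t \<in> T \<Longrightarrow> f t \<subseteq> U"
  shows "xsum f T \<subseteq> U"
proof
  fix x assume "x \<in> xsum f T"
  then have "{t\<in>T. x \<in> f t} \<noteq> {}" by (intro odd_card_imp_not_empty) (simp add: xsum_def)
  then show "x \<in> U" using assms by blast
qed

lemma xsum_cong: "(\<And>t. t \<in> T \<Longrightarrow> f t = g t) \<Longrightarrow> xsum f T = xsum g T"
  by (simp add: xsum_def cong: conj_cong)

lemma odd_card_xsum_Int:
  assumes "finite T" "finite C"
  shows "odd (card (xsum f T \<inter> C)) \<longleftrightarrow> odd (card {t\<in>T. odd (card (f t \<inter> C))})"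
proof -
  have "xsum f T \<inter> C = {x\<in>C. odd (card {t\<in>T. x \<in> f t})}" and "\<And>t. f t \<inter> C = {x\<in>C. x \<in> f t}"
    by (auto simp: xsum_def)
  then show ?thesis using odd_card_odd_card_swap[OF assms(2,1)] by simp
qed

lemma xsum_xsum:
  assumes "finite G" "finite J" "\<And>a. a \<in> G \<Longrightarrow> B a \<subseteq> J"
  shows "xsum h (xsum B G) = xsum (\<lambda>a. xsum h (B a)) G"
proof (rule set_eqI)
  fix x
  have "x \<in> xsum h (xsum B G) \<longleftrightarrow> odd (card {j\<in>J. odd (card {a\<in>G. j \<in> B a \<and> x \<in> h j})})"
  proof -
    have "odd (card {a\<in>G. j \<in> B a \<and> x \<in> h j}) \<longleftrightarrow> odd (card {a\<in>G. j \<in> B a}) \<and> x \<in> h j" for j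
      by (cases "x \<in> h j") auto
    then have "{t \<in> xsum B G. x \<in> h t} = {j\<in>J. odd (card {a\<in>G. j \<in> B a \<and> x \<in> h j})}"
      using xsum_subset[of G B J] assms(3) by (auto simp: xsum_def)
    then show ?thesis by (simp add: xsum_def)
  qed
  also have "\<dots> \<longleftrightarrow> odd (card {a\<in>G. odd (card {j\<in>J. j \<in> B a \<and> x \<in> h j})})"
    using odd_card_odd_card_swap[OF assms(2,1)] by simp
  also have "{a\<in>G. odd (card {j\<in>J. j \<in> B a \<and> x \<in> h j})} = {a\<in>G. x \<in> xsum h (B a)}"
  proof -
    have "a \<in> G \<Longrightarrow> {j\<in>J. j \<in> B a \<and> x \<in> h j} = {t \<in> B a. x \<in> h t}" for a
      using assms(3) by auto
    then show ?thesis by (auto simp: xsum_def)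
  qed
  finally show "x \<in> xsum h (xsum B G) \<longleftrightarrow> x \<in> xsum (\<lambda>a. xsum h (B a)) G"
    by (simp add: xsum_def)
qed

lemma f2_span_symd:
  assumes "a \<in> f2_span G" "b \<in> f2_span G"
  shows "symd a b \<in> f2_span G"
  using assms
proof (induction a rule: f2_span.induct)
  case (span_add s v)
  have "symd (symd s v) b = symd s (symd v b)" by auto
  then show ?case using span_add f2_span.span_add by simp
qed simp

lemma xsum_in_f2_span: "finite T \<Longrightarrow> (\<And>t. t \<in> T \<Longrightarrow> f t \<in> G) \<Longrightarrow> xsum f T \<in> f2_span G"
  by (induction T rule: finite_induct) (simp_all add: xsum_insert f2_span.intros)

lemma even_card_Int_f2_span:
  assumes "s \<in> f2_span G" "finite z" "\<And>g. g \<in> G \<Longrightarrow> even (card (g \<inter> z))"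
  shows "even (card (s \<inter> z))"
  using assms(1)
proof (induction s rule: f2_span.induct)
  case (span_add s v)
  then show ?case using assms(3)[of s] odd_card_symd_Int[OF assms(2), of s v] by simp
qed simp

lemma f2_kernel_symd:
  assumes "finite Q" "v \<in> f2_kernel Q I row" "w \<in> f2_kernel Q I row"
  shows "symd v w \<in> f2_kernel Q I row"
proof -
  have "even (card (symd v w \<inter> row r))" if "r \<in> I" for r
  proof -
    have fin: "finite (v \<inter> row r)" "finite (w \<inter> row r)"
      using assms by (auto simp: f2_kernel_def intro: finite_subset)
    show ?thesis
      using odd_card_symd[OF fin] assms(2,3) that by (simp add: f2_kernel_def symd_Int_distrib)
  qed
  then show ?thesis using assms(2,3) by (auto simp: f2_kernel_def)
qed

lemma f2_span_subset_f2_kernel: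
  assumes "finite Q" "G \<subseteq> f2_kernel Q I row"
  shows "f2_span G \<subseteq> f2_kernel Q I row"
proof
  fix s assume "s \<in> f2_span G"
  then show "s \<in> f2_kernel Q I row"
  proof (induction s rule: f2_span.induct)
    case span_zero
    then show ?case by (simp add: f2_kernel_def)
  next
    case (span_add s v)
    then show ?case using assms f2_kernel_symd by blast
  qed
qed

lemma f2_kernel_insert:
  "z \<in> f2_kernel U (insert i I) f \<longleftrightarrow> z \<in> f2_kernel U I f \<and> even (card (z \<inter> f i))"
  by (auto simp: f2_kernel_def)

lemma orthogonal_to_f2_kernel_symd:
  assumes "finite U" "f i \<subseteq> U" "v \<subseteq> U"
    and orth: "\<And>z. z \<in> f2_kernel U (insert i I) f \<Longrightarrow> even (card (z \<inter> v))"
    and z1: "z1 \<in> f2_kernel U I f" "odd (card (z1 \<inter> v))"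
    and z: "z \<in> f2_kernel U I f"
  shows "even (card (z \<inter> symd v (f i)))"
proof -
  have fin: "finite z" "finite (f i)" "finite v"
    using z assms(1-3) finite_subset by (auto simp: f2_kernel_def)
  have z1_i: "odd (card (z1 \<inter> f i))"
    using orth[of z1] z1 by (auto simp: f2_kernel_insert)
  have "odd (card (z \<inter> v)) \<longleftrightarrow> odd (card (z \<inter> f i))"
  proof (cases "even (card (z \<inter> f i))")
    case True
    then show ?thesis using orth[of z] z by (simp add: f2_kernel_insert)
  next
    case False
    have "even (card (symd z z1 \<inter> f i))"
      using odd_card_symd_Int[OF fin(2), of z z1] False z1_i by simp
    then have "symd z z1 \<in> f2_kernel U (insert i I) f"
      using f2_kernel_symd[OF assms(1) z z1(1)] by (simp add: f2_kernel_insert)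
    then have "even (card (symd z z1 \<inter> v))" by (rule orth)
    then show ?thesis using False z1(2) odd_card_symd_Int[OF fin(3), of z z1] by simp
  qed
  then show ?thesis using odd_card_Int_symd[OF fin(1), of v "f i"] by simp
qed

lemma ex_xsum_if_orthogonal_to_f2_kernel:
  assumes "finite U" "finite I" "\<And>i. i \<in> I \<Longrightarrow> f i \<subseteq> U" "v \<subseteq> U"
    and "\<And>z. z \<in> f2_kernel U I f \<Longrightarrow> even (card (z \<inter> v))"
  shows "\<exists>T\<subseteq>I. v = xsum f T"
  using assms(2-5)
proof (induction I arbitrary: v rule: finite_induct)
  case empty
  have "v = {}"
  proof (rule ccontr)
    assume "v \<noteq> {}"
    then obtain q where "q \<in> v" by blast
    then have "{q} \<in> f2_kernel U {} f" "{q} \<inter> v = {q}"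
      using empty.prems(2) by (auto simp: f2_kernel_def)
    then show False using empty.prems(3)[of "{q}"] by simp
  qed
  then show ?case by auto
next
  case (insert i I)
  show ?case
  proof (cases "\<forall>z\<in>f2_kernel U I f. even (card (z \<inter> v))")
    case True
    then have "\<exists>T\<subseteq>I. v = xsum f T" using insert.IH[of v] insert.prems(1,2) by simp
    then show ?thesis by blast
  next
    case False
    then obtain z1 where z1: "z1 \<in> f2_kernel U I f" "odd (card (z1 \<inter> v))" by blast
    have "even (card (z \<inter> symd v (f i)))" if "z \<in> f2_kernel U I f" for z
      by (rule orthogonal_to_f2_kernel_symd[OF assms(1) insert.prems(1)[OF insertI1]
            insert.prems(2) insert.prems(3) z1 that])
    moreover have "symd v (f i) \<subseteq> U" using insert.prems(1)[of i] insert.prems(2) by auto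
    ultimately obtain T where T: "T \<subseteq> I" "symd v (f i) = xsum f T"
      using insert.IH[of "symd v (f i)"] insert.prems(1) by auto
    have "finite T" "i \<notin> T" using T(1) insert.hyps finite_subset by auto
    then have "xsum f (insert i T) = symd (f i) (symd v (f i))" using T(2) by (simp add: xsum_insert)
    also have "\<dots> = v" by auto
    finally show ?thesis using T(1) by blast
  qed
qed

lemma ex_independent_spanning_subset:
  assumes "finite K"
  obtains J where "J \<subseteq> K" "\<And>k. k \<in> K \<Longrightarrow> \<exists>T\<subseteq>J. h k = xsum h T"
    "\<And>T. T \<subseteq> J \<Longrightarrow> xsum h T = {} \<Longrightarrow> T = {}"
proof -
  \<comment> \<open>a spanning subset of minimal size is independent\<close>
  define spans where "spans J \<longleftrightarrow> J \<subseteq> K \<and> (\<forall>k\<in>K. \<exists>T\<subseteq>J. h k = xsum h T)" for J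
  have "{k} \<subseteq> K \<and> h k = xsum h {k}" if "k \<in> K" for k
    using that by simp
  then have "spans K" unfolding spans_def by blast
  from ex_has_least_nat[of spans K card, OF this]
  obtain J where J: "spans J" and min: "\<forall>J'. spans J' \<longrightarrow> card J \<le> card J'"
    by blast
  then have J_sub: "J \<subseteq> K" and J_spans: "\<And>k. k \<in> K \<Longrightarrow> \<exists>T\<subseteq>J. h k = xsum h T"
    unfolding spans_def by auto
  have finJ: "finite J" using J_sub assms by (rule finite_subset)
  have indep: "T = {}" if T: "T \<subseteq> J" "xsum h T = {}" for T
  proof (rule ccontr)
    assume "T \<noteq> {}"
    then obtain t where t: "t \<in> T" by blast
    have "\<exists>S'\<subseteq>J - {t}. h k = xsum h S'" if "k \<in> K" for k
    proof -
      obtain S where S: "S \<subseteq> J" "h k = xsum h S" using J_spans \<open>k \<in> K\<close> by blast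
      show ?thesis
      proof (cases "t \<in> S")
        case True
        have "finite S" "finite T" using S(1) T(1) finJ finite_subset by auto
        then have "xsum h (symd S T) = h k" using S(2) T(2) by (simp add: xsum_symd_index)
        moreover have "symd S T \<subseteq> J - {t}" using S(1) T(1) t True by auto
        ultimately show ?thesis by blast
      next
        case False
        then show ?thesis using S by blast
      qed
    qed
    then have "spans (J - {t})" using J_sub unfolding spans_def by blast
    then have "card J \<le> card (J - {t})" using min by blast
    moreover have "card (J - {t}) < card J" using finJ t T(1) by (meson card_Diff1_less subsetD)
    ultimately show False by simp
  qed
  show thesis using J_sub J_spans indep by (rule that)
qed

lemma f2_kernel_spanning_subset:
  assumes "finite U" "finite J" "J \<subseteq> K" "\<And>k. k \<in> K \<Longrightarrow> \<exists>T\<subseteq>J. f k = xsum f T"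
  shows "f2_kernel U J f = f2_kernel U K f"
proof
  show "f2_kernel U K f \<subseteq> f2_kernel U J f" using assms(3) by (auto simp: f2_kernel_def)
  show "f2_kernel U J f \<subseteq> f2_kernel U K f"
  proof
    fix z assume z: "z \<in> f2_kernel U J f"
    have "even (card (z \<inter> f k))" if k: "k \<in> K" for k
    proof -
      obtain T where T: "T \<subseteq> J" "f k = xsum f T" using assms(4)[OF k] by blast
      have fin: "finite T" "finite z" using T(1) z assms(1,2) finite_subset by (auto simp: f2_kernel_def)
      have none_odd: "{t\<in>T. odd (card (f t \<inter> z))} = {}"
        using z T(1) by (auto simp: f2_kernel_def Int_commute)
      have "even (card (xsum f T \<inter> z))" using odd_card_xsum_Int[OF fin, of f, unfolded none_odd] by simp
      then show ?thesis using T(2) by (simp add: Int_commute)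
    qed
    then show "z \<in> f2_kernel U K f" using z by (auto simp: f2_kernel_def)
  qed
qed

lemma image_in_f2_kernel_iff:
  assumes "inj \<phi>"
  shows "\<phi> ` v \<in> f2_kernel (\<phi> ` Q) I (\<lambda>r. \<phi> ` row r) \<longleftrightarrow> v \<in> f2_kernel Q I row"
  using assms by (simp add: f2_kernel_def image_Int[symmetric] card_image inj_image_subset_iff inj_on_subset)

lemma image_in_f2_span:
  assumes "inj \<phi>" "v \<in> f2_span G"
  shows "\<phi> ` v \<in> f2_span ((`) \<phi> ` G)"
  using assms(2)
proof (induction v rule: f2_span.induct)
  case (span_add s v)
  then show ?case by (simp add: image_symd[OF assms(1)] f2_span.span_add)
qed (simp add: f2_span.span_zero)

text \<open>For an error whose bit-type part is the \<open>n\<^sub>1 \<times> n\<^sub>2\<close> matrix \<open>E\<close> and \<open>u \<in> ker H\<^sub>1\<close>,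
  \<open>slice_parities (\<lambda>i j. Inl (i, j)) u {..<n\<^sub>2} E\<close> is the row vector \<open>u\<^sup>T E\<close>.\<close>
definition slice_parities :: "('t \<Rightarrow> 'k \<Rightarrow> 'q) \<Rightarrow> 't set \<Rightarrow> 'k set \<Rightarrow> 'q set \<Rightarrow> 'k set" where
  "slice_parities p T K A = {k\<in>K. odd (card {t\<in>T. p t k \<in> A})}"

lemma slice_parities_symd:
  assumes "finite T"
  shows "slice_parities p T K (symd A B) = symd (slice_parities p T K A) (slice_parities p T K B)"
proof (rule set_eqI)
  fix k
  have "{t\<in>T. p t k \<in> symd A B} = symd {t\<in>T. p t k \<in> A} {t\<in>T. p t k \<in> B}"
    by auto
  moreover have "finite {t\<in>T. p t k \<in> A}" "finite {t\<in>T. p t k \<in> B}"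
    using assms by simp_all
  ultimately show "k \<in> slice_parities p T K (symd A B) \<longleftrightarrow>
      k \<in> symd (slice_parities p T K A) (slice_parities p T K B)"
    unfolding slice_parities_def mem_Collect_eq by (auto simp: odd_card_symd)
qed

lemma card_slice_parities_le_one:
  assumes "finite K" and one_slice: "\<And>t t' k k'. p t k \<in> P \<Longrightarrow> p t' k' \<in> P \<Longrightarrow> k = k'"
  shows "card (slice_parities p T K P) \<le> 1"
proof -
  have witness: "\<exists>t. p t k \<in> P" if "k \<in> slice_parities p T K P" for k
  proof -
    have "{t\<in>T. p t k \<in> P} \<noteq> {}"
      using that by (intro odd_card_imp_not_empty) (simp add: slice_parities_def)
    then show ?thesis by blast
  qed
  have "finite (slice_parities p T K P)" using assms(1) by (simp add: slice_parities_def)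
  moreover have "k = k'" if "k \<in> slice_parities p T K P" "k' \<in> slice_parities p T K P" for k k'
    using witness[OF that(1)] witness[OF that(2)] one_slice by blast
  ultimately have "card (slice_parities p T K P) \<le> Suc 0"
    using card_le_Suc0_iff_eq[of "slice_parities p T K P"] by blast
  then show ?thesis by simp
qed

lemma card_slice_parities_foldr_symd_le:
  assumes "finite T" "finite K"
    and "\<And>P t t' k k'. P \<in> set Ps \<Longrightarrow> p t k \<in> P \<Longrightarrow> p t' k' \<in> P \<Longrightarrow> k = k'"
  shows "card (slice_parities p T K (foldr symd Ps {})) \<le> length Ps"
  using assms(3)
proof (induction Ps)
  case Nil
  then show ?case by (simp add: slice_parities_def)
next
  case (Cons P Ps)
  have fin: "finite (slice_parities p T K A)" for A
    using assms(2) by (simp add: slice_parities_def)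
  have "card (slice_parities p T K P) \<le> 1"
    by (rule card_slice_parities_le_one[OF assms(2)]) (rule Cons.prems[OF list.set_intros(1)])
  moreover have "card (slice_parities p T K (foldr symd Ps {})) \<le> length Ps"
    by (rule Cons.IH) (rule Cons.prems[OF list.set_intros(2)])
  ultimately show ?case
    using card_symd_le[OF fin fin, of P "foldr symd Ps {}"]
    by (simp add: slice_parities_symd[OF assms(1)])
qed

section \<open>The hypergraph product code\<close>

definition mat_row :: "(nat \<Rightarrow> nat \<Rightarrow> bool) \<Rightarrow> nat \<Rightarrow> nat \<Rightarrow> nat set" where
  "mat_row H n a = {i. i < n \<and> H a i}"

definition mat_col :: "(nat \<Rightarrow> nat \<Rightarrow> bool) \<Rightarrow> nat \<Rightarrow> nat \<Rightarrow> nat set" where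
  "mat_col H r j = {b. b < r \<and> H b j}"

lemma Inl_in_hgp_X_row [simp]:
  "Inl (i, j) \<in> hgp_X_row H1 H2 n1 r2 (a, j') \<longleftrightarrow> j' = j \<and> i < n1 \<and> H1 a i"
  by (auto simp: hgp_X_row_def)

lemma Inr_in_hgp_X_row [simp]:
  "Inr (a', b) \<in> hgp_X_row H1 H2 n1 r2 (a, j) \<longleftrightarrow> a' = a \<and> b < r2 \<and> H2 b j"
  by (auto simp: hgp_X_row_def)

lemma Inl_in_hgp_Z_row [simp]:
  "Inl (i', j) \<in> hgp_Z_row H1 H2 r1 n2 (i, b) \<longleftrightarrow> i' = i \<and> j < n2 \<and> H2 b j"
  by (auto simp: hgp_Z_row_def)

lemma Inr_in_hgp_Z_row [simp]:
  "Inr (a, b') \<in> hgp_Z_row H1 H2 r1 n2 (i, b) \<longleftrightarrow> b' = b \<and> a < r1 \<and> H1 a i"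
  by (auto simp: hgp_Z_row_def)

lemma Inl_in_hgp_qubits [simp]: "Inl (i, j) \<in> hgp_qubits r1 n1 r2 n2 \<longleftrightarrow> i < n1 \<and> j < n2"
  by (auto simp: hgp_qubits_def)

lemma Inr_in_hgp_qubits [simp]: "Inr (a, b) \<in> hgp_qubits r1 n1 r2 n2 \<longleftrightarrow> a < r1 \<and> b < r2"
  by (auto simp: hgp_qubits_def)

lemma finite_hgp_qubits [simp]: "finite (hgp_qubits r1 n1 r2 n2)"
  by (simp add: hgp_qubits_def)

lemma hgp_X_row_subset_qubits:
  "r \<in> hgp_X_rows r1 n2 \<Longrightarrow> hgp_X_row H1 H2 n1 r2 r \<subseteq> hgp_qubits r1 n1 r2 n2"
  by (auto simp: hgp_X_rows_def hgp_X_row_def)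

lemma card_Int_hgp_Z_row:
  "card (S \<inter> hgp_Z_row H1 H2 r1 n2 (i, b)) =
     card {j\<in>{..<n2}. H2 b j \<and> Inl (i, j) \<in> S} + card {a\<in>{..<r1}. H1 a i \<and> Inr (a, b) \<in> S}"
proof -
  let ?J = "{j\<in>{..<n2}. H2 b j \<and> Inl (i, j) \<in> S}" and ?A = "{a\<in>{..<r1}. H1 a i \<and> Inr (a, b) \<in> S}"
  have eq: "S \<inter> hgp_Z_row H1 H2 r1 n2 (i, b) = (\<lambda>j. Inl (i, j)) ` ?J \<union> (\<lambda>a. Inr (a, b)) ` ?A"
    by (auto simp: hgp_Z_row_def)
  have "card (S \<inter> hgp_Z_row H1 H2 r1 n2 (i, b)) =
      card ((\<lambda>j. Inl (i, j) :: qubit) ` ?J) + card ((\<lambda>a. Inr (a, b) :: qubit) ` ?A)"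
    unfolding eq by (rule card_Un_disjoint) auto
  then show ?thesis
    by (simp add: card_image inj_on_def)
qed

lemma ker_HZ_parity:
  assumes "e \<in> ker_HZ H1 H2 r1 n1 r2 n2" "i < n1" "b < r2"
  shows "odd (card {j\<in>{..<n2}. H2 b j \<and> Inl (i, j) \<in> e}) \<longleftrightarrow>
    odd (card {a\<in>{..<r1}. H1 a i \<and> Inr (a, b) \<in> e})"
proof -
  have "even (card (e \<inter> hgp_Z_row H1 H2 r1 n2 (i, b)))"
    using assms by (auto simp: ker_HZ_def f2_kernel_def hgp_Z_rows_def)
  then show ?thesis by (simp add: card_Int_hgp_Z_row)
qed

lemma card_Int_image_Inl: "card (A \<inter> (\<lambda>i. Inl (i, j)) ` u) = card {i\<in>u. Inl (i, j) \<in> A}"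
proof -
  have "A \<inter> (\<lambda>i. Inl (i, j)) ` u = (\<lambda>i. Inl (i, j)) ` {i\<in>u. Inl (i, j) \<in> A}" by auto
  then show ?thesis by (simp add: card_image inj_on_def)
qed

lemma card_Int_image_Inr: "card (A \<inter> (\<lambda>b. Inr (a, b)) ` w) = card {b\<in>w. Inr (a, b) \<in> A}"
proof -
  have "A \<inter> (\<lambda>b. Inr (a, b)) ` w = (\<lambda>b. Inr (a, b)) ` {b\<in>w. Inr (a, b) \<in> A}" by auto
  then show ?thesis by (simp add: card_image inj_on_def)
qed

lemma Inl_image_in_ker_HX:
  assumes u: "u \<in> f2_kernel {..<n1} {..<r1} (mat_row H1 n1)" and "j < n2"
  shows "(\<lambda>i. Inl (i, j)) ` u \<in> ker_HX H1 H2 r1 n1 r2 n2"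
proof -
  have "even (card (hgp_X_row H1 H2 n1 r2 (a, j') \<inter> (\<lambda>i. Inl (i, j)) ` u))" if "a < r1" for a j'
  proof -
    have "{i\<in>u. Inl (i, j) \<in> hgp_X_row H1 H2 n1 r2 (a, j')} = (if j' = j then u \<inter> mat_row H1 n1 a else {})"
      by (auto simp: mat_row_def)
    then show ?thesis using u that by (simp add: card_Int_image_Inl f2_kernel_def)
  qed
  then show ?thesis
    using u \<open>j < n2\<close> by (auto simp: ker_HX_def f2_kernel_def hgp_X_rows_def Int_commute)
qed

lemma Inr_image_in_ker_HX:
  assumes w: "w \<in> f2_kernel {..<r2} {..<n2} (mat_col H2 r2)" and "a < r1"
  shows "(\<lambda>b. Inr (a, b)) ` w \<in> ker_HX H1 H2 r1 n1 r2 n2"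
proof -
  have "even (card (hgp_X_row H1 H2 n1 r2 (a', j) \<inter> (\<lambda>b. Inr (a, b)) ` w))" if "j < n2" for a' j
  proof -
    have "{b\<in>w. Inr (a, b) \<in> hgp_X_row H1 H2 n1 r2 (a', j)} = (if a' = a then w \<inter> mat_col H2 r2 j else {})"
      by (auto simp: mat_col_def)
    then show ?thesis using w that by (simp add: card_Int_image_Inr f2_kernel_def)
  qed
  then show ?thesis
    using w \<open>a < r1\<close> by (auto simp: ker_HX_def f2_kernel_def hgp_X_rows_def Int_commute)
qed

lemma hgp_X_row_in_ker_HZ:
  assumes "r \<in> hgp_X_rows r1 n2"
  shows "hgp_X_row H1 H2 n1 r2 r \<in> ker_HZ H1 H2 r1 n1 r2 n2"
proof -
  obtain a j where r: "r = (a, j)" "a < r1" "j < n2" using assms by (auto simp: hgp_X_rows_def)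
  have "even (card (hgp_X_row H1 H2 n1 r2 r \<inter> hgp_Z_row H1 H2 r1 n2 (i, b)))"
    if "i < n1" "b < r2" for i b
  proof -
    have "{j'\<in>{..<n2}. H2 b j' \<and> Inl (i, j') \<in> hgp_X_row H1 H2 n1 r2 r} = (if H1 a i \<and> H2 b j then {j} else {})"
      "{a'\<in>{..<r1}. H1 a' i \<and> Inr (a', b) \<in> hgp_X_row H1 H2 n1 r2 r} = (if H1 a i \<and> H2 b j then {a} else {})"
      using r that by auto
    then show ?thesis by (simp add: card_Int_hgp_Z_row)
  qed
  then show ?thesis
    using hgp_X_row_subset_qubits[OF assms] by (auto simp: ker_HZ_def f2_kernel_def hgp_Z_rows_def)
qed

lemma im_HXT_subset_ker_HZ: "im_HXT H1 H2 r1 n1 r2 n2 \<subseteq> ker_HZ H1 H2 r1 n1 r2 n2"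
  unfolding im_HXT_def
  by (metis (no_types) f2_span_subset_f2_kernel finite_hgp_qubits image_subsetI hgp_X_row_in_ker_HZ ker_HZ_def)

lemma even_card_Int_im_HXT_ker_HX:
  assumes "s \<in> im_HXT H1 H2 r1 n1 r2 n2" "z \<in> ker_HX H1 H2 r1 n1 r2 n2"
  shows "even (card (s \<inter> z))"
proof (rule even_card_Int_f2_span[OF assms(1)[unfolded im_HXT_def]])
  show "finite z"
    using assms(2) finite_subset[OF _ finite_hgp_qubits] by (auto simp: ker_HX_def f2_kernel_def)
  show "even (card (g \<inter> z))" if "g \<in> hgp_X_row H1 H2 n1 r2 ` hgp_X_rows r1 n2" for g
    using that assms(2) by (auto simp: ker_HX_def f2_kernel_def Int_commute)
qed

lemma Inl_in_xsum_hgp_X_row: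
  "Inl (i, j) \<in> xsum (hgp_X_row H1 H2 n1 r2) M \<longleftrightarrow> i \<in> xsum (mat_row H1 n1) {a. (a, j) \<in> M}"
proof -
  have "{p\<in>M. Inl (i, j) \<in> hgp_X_row H1 H2 n1 r2 p} = (\<lambda>a. (a, j)) ` {a\<in>{a. (a, j) \<in> M}. i \<in> mat_row H1 n1 a}"
    by (auto simp: mat_row_def)
  then show ?thesis by (simp add: xsum_def card_image inj_on_def)
qed

lemma Inr_in_xsum_hgp_X_row:
  "Inr (a, b) \<in> xsum (hgp_X_row H1 H2 n1 r2) M \<longleftrightarrow> b \<in> xsum (mat_col H2 r2) {j. (a, j) \<in> M}"
proof -
  have "{p\<in>M. Inr (a, b) \<in> hgp_X_row H1 H2 n1 r2 p} = (\<lambda>j. (a, j)) ` {j\<in>{j. (a, j) \<in> M}. b \<in> mat_col H2 r2 j}"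
    by (auto simp: mat_col_def)
  then show ?thesis by (simp add: xsum_def card_image inj_on_def)
qed

section \<open>Logical operators detected by product vectors\<close>

lemma Inl_slice_parities_in_ker_HZ:
  assumes e: "e \<in> ker_HZ H1 H2 r1 n1 r2 n2"
    and u: "u \<in> f2_kernel {..<n1} {..<r1} (mat_row H1 n1)" and "i0 < n1"
  shows "(\<lambda>j. Inl (i0, j)) ` slice_parities (\<lambda>i j. Inl (i, j)) u {..<n2} e \<in> ker_HZ H1 H2 r1 n1 r2 n2"
    (is "?L \<in> _")
proof -
  have "even (card {j\<in>{..<n2}. H2 b j \<and> Inl (i0, j) \<in> ?L})" if "b < r2" for b
  proof -
    have "odd (card {i\<in>u. H2 b j \<and> Inl (i, j) \<in> e}) \<longleftrightarrow> H2 b j \<and> odd (card {i\<in>u. Inl (i, j) \<in> e})" for j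
      by (cases "H2 b j") simp_all
    then have "{j\<in>{..<n2}. H2 b j \<and> Inl (i0, j) \<in> ?L} = {j\<in>{..<n2}. odd (card {i\<in>u. H2 b j \<and> Inl (i, j) \<in> e})}"
      by (auto simp: slice_parities_def)
    moreover have "even (card {j\<in>{..<n2}. odd (card {i\<in>u. H2 b j \<and> Inl (i, j) \<in> e})})"
      \<comment> \<open>\<open>u\<^sup>T E H\<^sub>2\<^sup>T = u\<^sup>T H\<^sub>1\<^sup>T E' = (H\<^sub>1 u)\<^sup>T E' = 0\<close>, where \<open>E, E'\<close> are the bit- and check-type parts of \<open>e\<close>\<close>
    proof (rule even_card_odd_card_transfer[where C = "{..<r1}"])
      show "finite u" using u finite_subset by (auto simp: f2_kernel_def)
      show "odd (card {j\<in>{..<n2}. H2 b j \<and> Inl (i, j) \<in> e}) \<longleftrightarrow>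
          odd (card {a\<in>{..<r1}. H1 a i \<and> Inr (a, b) \<in> e})" if "i \<in> u" for i
        using ker_HZ_parity[OF e _ \<open>b < r2\<close>] that u by (auto simp: f2_kernel_def)
      show "even (card {i\<in>u. H1 a i \<and> Inr (a, b) \<in> e})" if "a \<in> {..<r1}" for a
      proof -
        have "{i\<in>u. H1 a i \<and> Inr (a, b) \<in> e} = (if Inr (a, b) \<in> e then u \<inter> mat_row H1 n1 a else {})"
          using u by (auto simp: f2_kernel_def mat_row_def)
        then show ?thesis using u that by (simp add: f2_kernel_def)
      qed
    qed simp_all
    ultimately show ?thesis by simp
  qed
  moreover have "Inr q \<notin> ?L" "i \<noteq> i0 \<Longrightarrow> Inl (i, j) \<notin> ?L" for q i j
    by auto
  ultimately have "even (card (?L \<inter> hgp_Z_row H1 H2 r1 n2 (i, b)))" if "b < r2" for i b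
    using that by (cases "i = i0") (simp_all add: card_Int_hgp_Z_row)
  moreover have "?L \<subseteq> hgp_qubits r1 n1 r2 n2"
    using \<open>i0 < n1\<close> by (auto simp: slice_parities_def)
  ultimately show ?thesis by (auto simp: ker_HZ_def f2_kernel_def hgp_Z_rows_def)
qed

lemma Inr_slice_parities_in_ker_HZ:
  assumes e: "e \<in> ker_HZ H1 H2 r1 n1 r2 n2"
    and w: "w \<in> f2_kernel {..<r2} {..<n2} (mat_col H2 r2)" and "b0 < r2"
  shows "(\<lambda>a. Inr (a, b0)) ` slice_parities (\<lambda>b a. Inr (a, b)) w {..<r1} e \<in> ker_HZ H1 H2 r1 n1 r2 n2"
    (is "?L \<in> _")
proof -
  have "even (card {a\<in>{..<r1}. H1 a i \<and> Inr (a, b0) \<in> ?L})" if "i < n1" for i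
  proof -
    have "odd (card {b\<in>w. H1 a i \<and> Inr (a, b) \<in> e}) \<longleftrightarrow> H1 a i \<and> odd (card {b\<in>w. Inr (a, b) \<in> e})" for a
      by (cases "H1 a i") simp_all
    then have "{a\<in>{..<r1}. H1 a i \<and> Inr (a, b0) \<in> ?L} = {a\<in>{..<r1}. odd (card {b\<in>w. H1 a i \<and> Inr (a, b) \<in> e})}"
      by (auto simp: slice_parities_def)
    moreover have "even (card {a\<in>{..<r1}. odd (card {b\<in>w. H1 a i \<and> Inr (a, b) \<in> e})})"
      \<comment> \<open>\<open>H\<^sub>1\<^sup>T E' w = E H\<^sub>2\<^sup>T w = 0\<close>, where \<open>E, E'\<close> are the bit- and check-type parts of \<open>e\<close>\<close>
    proof (rule even_card_odd_card_transfer[where C = "{..<n2}"])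
      show "finite w" using w finite_subset by (auto simp: f2_kernel_def)
      show "odd (card {a\<in>{..<r1}. H1 a i \<and> Inr (a, b) \<in> e}) \<longleftrightarrow>
          odd (card {j\<in>{..<n2}. H2 b j \<and> Inl (i, j) \<in> e})" if "b \<in> w" for b
        using ker_HZ_parity[OF e \<open>i < n1\<close>, of b] that w by (auto simp: f2_kernel_def)
      show "even (card {b\<in>w. H2 b j \<and> Inl (i, j) \<in> e})" if "j \<in> {..<n2}" for j
      proof -
        have "{b\<in>w. H2 b j \<and> Inl (i, j) \<in> e} = (if Inl (i, j) \<in> e then w \<inter> mat_col H2 r2 j else {})"
          using w by (auto simp: f2_kernel_def mat_col_def)
        then show ?thesis using w that by (simp add: f2_kernel_def)
      qed
    qed simp_all
    ultimately show ?thesis by simp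
  qed
  moreover have "Inl q \<notin> ?L" "b \<noteq> b0 \<Longrightarrow> Inr (a, b) \<notin> ?L" for q a b
    by auto
  ultimately have "even (card (?L \<inter> hgp_Z_row H1 H2 r1 n2 (i, b)))" if "i < n1" for i b
    using that by (cases "b = b0") (simp_all add: card_Int_hgp_Z_row)
  moreover have "?L \<subseteq> hgp_qubits r1 n1 r2 n2"
    using \<open>b0 < r2\<close> by (auto simp: slice_parities_def)
  ultimately show ?thesis by (auto simp: ker_HZ_def f2_kernel_def hgp_Z_rows_def)
qed

lemma Inl_slice_parities_logical:
  assumes e: "e \<in> ker_HZ H1 H2 r1 n1 r2 n2"
    and u: "u \<in> f2_kernel {..<n1} {..<r1} (mat_row H1 n1)" and "i0 \<in> u"
    and j0: "j0 \<in> slice_parities (\<lambda>i j. Inl (i, j)) u {..<n2} e"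
  shows "(\<lambda>j. Inl (i0, j)) ` slice_parities (\<lambda>i j. Inl (i, j)) u {..<n2} e \<in> hgp_logicals H1 H2 r1 n1 r2 n2"
    (is "?L \<in> _")
proof -
  have "i0 < n1" "j0 < n2" using u \<open>i0 \<in> u\<close> j0 by (auto simp: f2_kernel_def slice_parities_def)
  have "?L \<inter> (\<lambda>i. Inl (i, j0)) ` u = {Inl (i0, j0)}" using \<open>i0 \<in> u\<close> j0 by auto
  then have "?L \<notin> im_HXT H1 H2 r1 n1 r2 n2"
    using even_card_Int_im_HXT_ker_HX[OF _ Inl_image_in_ker_HX[OF u \<open>j0 < n2\<close>]] by fastforce
  then show ?thesis
    using Inl_slice_parities_in_ker_HZ[OF e u \<open>i0 < n1\<close>] by (simp add: hgp_logicals_def)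
qed

lemma Inr_slice_parities_logical:
  assumes e: "e \<in> ker_HZ H1 H2 r1 n1 r2 n2"
    and w: "w \<in> f2_kernel {..<r2} {..<n2} (mat_col H2 r2)" and "b0 \<in> w"
    and a0: "a0 \<in> slice_parities (\<lambda>b a. Inr (a, b)) w {..<r1} e"
  shows "(\<lambda>a. Inr (a, b0)) ` slice_parities (\<lambda>b a. Inr (a, b)) w {..<r1} e \<in> hgp_logicals H1 H2 r1 n1 r2 n2"
    (is "?L \<in> _")
proof -
  have "b0 < r2" "a0 < r1" using w \<open>b0 \<in> w\<close> a0 by (auto simp: f2_kernel_def slice_parities_def)
  have "?L \<inter> (\<lambda>b. Inr (a0, b)) ` w = {Inr (a0, b0)}" using \<open>b0 \<in> w\<close> a0 by auto
  then have "?L \<notin> im_HXT H1 H2 r1 n1 r2 n2"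
    using even_card_Int_im_HXT_ker_HX[OF _ Inr_image_in_ker_HX[OF w \<open>a0 < r1\<close>]] by fastforce
  then show ?thesis
    using Inr_slice_parities_in_ker_HZ[OF e w \<open>b0 < r2\<close>] by (simp add: hgp_logicals_def)
qed

section \<open>A Kunneth-type criterion for \<open>im H\<^sub>X\<^sup>T\<close>\<close>

lemma ex_im_HXT_eq_on_Inl:
  assumes eQ: "e \<subseteq> hgp_qubits r1 n1 r2 n2"
    and tests: "\<And>u. u \<in> f2_kernel {..<n1} {..<r1} (mat_row H1 n1) \<Longrightarrow>
      slice_parities (\<lambda>i j. Inl (i, j)) u {..<n2} e = {}"
  obtains s where "s \<in> im_HXT H1 H2 r1 n1 r2 n2" "\<And>i j. Inl (i, j) \<in> s \<longleftrightarrow> Inl (i, j) \<in> e"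
proof -
  have "\<exists>A\<subseteq>{..<r1}. {i. Inl (i, j) \<in> e} = xsum (mat_row H1 n1) A" if "j < n2" for j
  proof (rule ex_xsum_if_orthogonal_to_f2_kernel)
    show "{i. Inl (i, j) \<in> e} \<subseteq> {..<n1}" using eQ by auto
    show "even (card (z \<inter> {i. Inl (i, j) \<in> e}))"
      if "z \<in> f2_kernel {..<n1} {..<r1} (mat_row H1 n1)" for z
      using tests[OF that] \<open>j < n2\<close> by (auto simp: slice_parities_def Int_def)
  qed (auto simp: mat_row_def)
  then obtain A where A: "\<And>j. j < n2 \<Longrightarrow> A j \<subseteq> {..<r1} \<and> {i. Inl (i, j) \<in> e} = xsum (mat_row H1 n1) (A j)"
    by metis
  define M where "M = {(a, j). j < n2 \<and> a \<in> A j}"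
  have "M \<subseteq> hgp_X_rows r1 n2" using A by (auto simp: M_def hgp_X_rows_def)
  then have "xsum (hgp_X_row H1 H2 n1 r2) M \<in> im_HXT H1 H2 r1 n1 r2 n2"
    unfolding im_HXT_def by (intro xsum_in_f2_span) (auto simp: hgp_X_rows_def intro: finite_subset)
  moreover have "Inl (i, j) \<in> xsum (hgp_X_row H1 H2 n1 r2) M \<longleftrightarrow> Inl (i, j) \<in> e" for i j
  proof (cases "j < n2")
    case True
    then have "{a. (a, j) \<in> M} = A j" by (auto simp: M_def)
    then show ?thesis using A[OF True] by (auto simp: Inl_in_xsum_hgp_X_row)
  next
    case False
    then have "{a. (a, j) \<in> M} = {}" by (auto simp: M_def)
    then show ?thesis using False eQ by (auto simp: Inl_in_xsum_hgp_X_row)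
  qed
  ultimately show thesis by (rule that)
qed

lemma xsum_Inr_rows_eq_empty:
  assumes e: "e \<in> ker_HZ H1 H2 r1 n1 r2 n2" and Inl_free: "\<And>i j. Inl (i, j) \<notin> e" and "i < n1"
  shows "xsum (\<lambda>a. {b. Inr (a, b) \<in> e}) {a. a < r1 \<and> H1 a i} = {}"
proof -
  have "even (card {a\<in>{..<r1}. H1 a i \<and> Inr (a, b) \<in> e})" for b
  proof (cases "b < r2")
    case True
    then show ?thesis using ker_HZ_parity[OF e \<open>i < n1\<close> True] Inl_free by simp
  next
    case False
    then have none: "{a\<in>{..<r1}. H1 a i \<and> Inr (a, b) \<in> e} = {}"
      using e by (auto simp: ker_HZ_def f2_kernel_def)
    show ?thesis unfolding none by simp
  qed
  moreover have "{a\<in>{a. a < r1 \<and> H1 a i}. b \<in> {b. Inr (a, b) \<in> e}} = {a\<in>{..<r1}. H1 a i \<and> Inr (a, b) \<in> e}" for b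
    by auto
  ultimately show ?thesis unfolding xsum_def by auto
qed

lemma Inl_free_eq_xsum_hgp_X_row:
  assumes e: "e \<in> ker_HZ H1 H2 r1 n1 r2 n2" and Inl_free: "\<And>i j. Inl (i, j) \<notin> e"
    and J: "finite J" "\<And>T. T \<subseteq> J \<Longrightarrow> xsum (mat_col H2 r2) T = {} \<Longrightarrow> T = {}"
    and B: "\<And>a. a < r1 \<Longrightarrow> B a \<subseteq> J \<and> {b. Inr (a, b) \<in> e} = xsum (mat_col H2 r2) (B a)"
  shows "e = xsum (hgp_X_row H1 H2 n1 r2) {(a, j). a < r1 \<and> j \<in> B a}"
    (is "e = xsum _ ?N")
proof -
  let ?col = "mat_col H2 r2" and ?row = "\<lambda>a. {b. Inr (a, b) \<in> e}"
  have Inr_agree: "Inr (a, b) \<in> xsum (hgp_X_row H1 H2 n1 r2) ?N \<longleftrightarrow> Inr (a, b) \<in> e" for a b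
  proof (cases "a < r1")
    case True
    then have N_a: "{j. (a, j) \<in> ?N} = B a" by auto
    show ?thesis unfolding Inr_in_xsum_hgp_X_row N_a using B[OF True] by auto
  next
    case False
    then have N_a: "{j. (a, j) \<in> ?N} = {}" by auto
    show ?thesis
      unfolding Inr_in_xsum_hgp_X_row N_a using False e by (auto simp: ker_HZ_def f2_kernel_def)
  qed
  have Inl_absent: "Inl (i, j) \<notin> xsum (hgp_X_row H1 H2 n1 r2) ?N" for i j
  proof -
    let ?G = "{a. a < r1 \<and> H1 a i}"
    have coeffs: "{t \<in> {a. (a, j) \<in> ?N}. i \<in> mat_row H1 n1 t} = (if i < n1 then {a\<in>?G. j \<in> B a} else {})"
      by (auto simp: mat_row_def)
    have "xsum B ?G = {}" if "i < n1"
    proof -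
      \<comment> \<open>\<open>H\<^sub>1\<^sup>T\<close> kills the check-type part of \<open>e\<close>; independence of \<open>J\<close> passes this on to the coefficients \<open>B\<close>\<close>
      have sub: "xsum B ?G \<subseteq> J" using B by (intro xsum_subset) auto
      have "xsum ?col (xsum B ?G) = xsum (\<lambda>a. xsum ?col (B a)) ?G"
        using B by (intro xsum_xsum[OF _ J(1)]) auto
      also have "\<dots> = xsum ?row ?G" using B by (intro xsum_cong) auto
      also have "\<dots> = {}" by (rule xsum_Inr_rows_eq_empty[OF e Inl_free that])
      finally show ?thesis by (rule J(2)[OF sub])
    qed
    then show ?thesis
      unfolding Inl_in_xsum_hgp_X_row unfolding mem_xsum_iff coeffs by (auto simp: xsum_def)
  qed
  show ?thesis
  proof (rule set_eqI)
    show "q \<in> e \<longleftrightarrow> q \<in> xsum (hgp_X_row H1 H2 n1 r2) ?N" for q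
      using Inr_agree Inl_absent Inl_free by (cases q) auto
  qed
qed

lemma in_im_HXT_if_Inl_free:
  assumes e: "e \<in> ker_HZ H1 H2 r1 n1 r2 n2" and Inl_free: "\<And>i j. Inl (i, j) \<notin> e"
    and tests: "\<And>w. w \<in> f2_kernel {..<r2} {..<n2} (mat_col H2 r2) \<Longrightarrow>
      slice_parities (\<lambda>b a. Inr (a, b)) w {..<r1} e = {}"
  shows "e \<in> im_HXT H1 H2 r1 n1 r2 n2"
proof -
  let ?col = "mat_col H2 r2" and ?row = "\<lambda>a. {b. Inr (a, b) \<in> e}"
  obtain J where J: "J \<subseteq> {..<n2}" "\<And>k. k \<in> {..<n2} \<Longrightarrow> \<exists>T\<subseteq>J. ?col k = xsum ?col T"
      "\<And>T. T \<subseteq> J \<Longrightarrow> xsum ?col T = {} \<Longrightarrow> T = {}"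
    using ex_independent_spanning_subset[of "{..<n2}" ?col] by blast
  have finJ: "finite J" using J(1) finite_subset by blast
  have "\<exists>B\<subseteq>J. ?row a = xsum ?col B" if "a < r1" for a
  proof (rule ex_xsum_if_orthogonal_to_f2_kernel[where U = "{..<r2}"])
    show "?row a \<subseteq> {..<r2}" using e by (auto simp: ker_HZ_def f2_kernel_def)
    show "even (card (z \<inter> ?row a))" if "z \<in> f2_kernel {..<r2} J ?col" for z
      using tests[of z] that f2_kernel_spanning_subset[OF _ finJ J(1,2)] \<open>a < r1\<close>
      by (auto simp: slice_parities_def Int_def)
  qed (use finJ in \<open>auto simp: mat_col_def\<close>)
  then obtain B where B: "\<And>a. a < r1 \<Longrightarrow> B a \<subseteq> J \<and> ?row a = xsum ?col (B a)"
    by metis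
  have "{(a, j). a < r1 \<and> j \<in> B a} \<subseteq> hgp_X_rows r1 n2"
    using B J(1) by (auto simp: hgp_X_rows_def)
  then have "xsum (hgp_X_row H1 H2 n1 r2) {(a, j). a < r1 \<and> j \<in> B a} \<in> im_HXT H1 H2 r1 n1 r2 n2"
    unfolding im_HXT_def by (intro xsum_in_f2_span) (auto simp: hgp_X_rows_def intro: finite_subset)
  then show ?thesis
    using Inl_free_eq_xsum_hgp_X_row[OF e Inl_free finJ J(3) B] by simp
qed

lemma in_im_HXT_if_slice_parities_vanish:
  assumes e: "e \<in> ker_HZ H1 H2 r1 n1 r2 n2"
    and Inl_tests: "\<And>u. u \<in> f2_kernel {..<n1} {..<r1} (mat_row H1 n1) \<Longrightarrow>
      slice_parities (\<lambda>i j. Inl (i, j)) u {..<n2} e = {}"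
    and Inr_tests: "\<And>w. w \<in> f2_kernel {..<r2} {..<n2} (mat_col H2 r2) \<Longrightarrow>
      slice_parities (\<lambda>b a. Inr (a, b)) w {..<r1} e = {}"
  shows "e \<in> im_HXT H1 H2 r1 n1 r2 n2"
proof -
  have "e \<subseteq> hgp_qubits r1 n1 r2 n2" using e by (simp add: ker_HZ_def f2_kernel_def)
  then obtain s where s: "s \<in> im_HXT H1 H2 r1 n1 r2 n2" "\<And>i j. Inl (i, j) \<in> s \<longleftrightarrow> Inl (i, j) \<in> e"
    using ex_im_HXT_eq_on_Inl[OF _ Inl_tests] by blast
  have "symd e s \<in> im_HXT H1 H2 r1 n1 r2 n2"
  proof (rule in_im_HXT_if_Inl_free)
    have "s \<in> ker_HZ H1 H2 r1 n1 r2 n2" using s(1) im_HXT_subset_ker_HZ by blast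
    then show "symd e s \<in> ker_HZ H1 H2 r1 n1 r2 n2"
      using f2_kernel_symd[OF finite_hgp_qubits] e unfolding ker_HZ_def by blast
    show "Inl (i, j) \<notin> symd e s" for i j using s(2) by simp
    show "slice_parities (\<lambda>b a. Inr (a, b)) w {..<r1} (symd e s) = {}"
      if w: "w \<in> f2_kernel {..<r2} {..<n2} (mat_col H2 r2)" for w
    proof -
      have "even (card {b\<in>w. Inr (a, b) \<in> s})" if "a < r1" for a
        using even_card_Int_im_HXT_ker_HX[OF s(1) Inr_image_in_ker_HX[OF w that]]
        by (simp add: card_Int_image_Inr)
      then have "slice_parities (\<lambda>b a. Inr (a, b)) w {..<r1} s = {}"
        by (auto simp: slice_parities_def)
      moreover have "finite w" using w finite_subset by (auto simp: f2_kernel_def)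
      ultimately show ?thesis using Inr_tests[OF w] by (simp add: slice_parities_symd)
    qed
  qed
  then have "symd (symd e s) s \<in> im_HXT H1 H2 r1 n1 r2 n2"
    using s(1) f2_span_symd by (auto simp: im_HXT_def)
  moreover have "symd (symd e s) s = e" by auto
  ultimately show ?thesis by simp
qed

section \<open>Errors built from single qubits and parts of \<open>X\<close>-checks\<close>

lemma hgp_distance_le:
  "L \<in> hgp_logicals H1 H2 r1 n1 r2 n2 \<Longrightarrow> card L \<le> m \<Longrightarrow> hgp_distance H1 H2 r1 n1 r2 n2 \<le> enat m"
  unfolding hgp_distance_def by (rule INF_lower2) auto

lemma hgp_X_piece_slices:
  assumes "(\<exists>q. P \<subseteq> {q}) \<or> (\<exists>r. P \<subseteq> hgp_X_row H1 H2 n1 r2 r)"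
  shows "Inl (i, j) \<in> P \<Longrightarrow> Inl (i', j') \<in> P \<Longrightarrow> j = j'"
    and "Inr (a, b) \<in> P \<Longrightarrow> Inr (a', b') \<in> P \<Longrightarrow> a = a'"
proof -
  consider (single) q where "P \<subseteq> {q}" | (row) x y where "P \<subseteq> hgp_X_row H1 H2 n1 r2 (x, y)"
    using assms by (metis surj_pair)
  note piece = this
  show "j = j'" if "Inl (i, j) \<in> P" "Inl (i', j') \<in> P"
    using piece
  proof cases
    case single
    then have "Inl (i, j) = Inl (i', j')" using that by blast
    then show ?thesis by simp
  next
    case (row x y)
    then have "Inl (i, j) \<in> hgp_X_row H1 H2 n1 r2 (x, y)" "Inl (i', j') \<in> hgp_X_row H1 H2 n1 r2 (x, y)"
      using that by blast+
    then show ?thesis by simp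
  qed
  show "a = a'" if "Inr (a, b) \<in> P" "Inr (a', b') \<in> P"
    using piece
  proof cases
    case single
    then have "Inr (a, b) = Inr (a', b')" using that by blast
    then show ?thesis by simp
  next
    case (row x y)
    then have "Inr (a, b) \<in> hgp_X_row H1 H2 n1 r2 (x, y)" "Inr (a', b') \<in> hgp_X_row H1 H2 n1 r2 (x, y)"
      using that by blast+
    then show ?thesis by simp
  qed
qed

lemma hgp_distance_le_X_pieces:
  assumes e: "e \<in> ker_HZ H1 H2 r1 n1 r2 n2" "e \<notin> im_HXT H1 H2 r1 n1 r2 n2"
    and pieces: "\<forall>P\<in>set Ps. (\<exists>q. P \<subseteq> {q}) \<or> (\<exists>r\<in>hgp_X_rows r1 n2. P \<subseteq> hgp_X_row H1 H2 n1 r2 r)"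
    and e_eq: "e = foldr symd Ps {}"
  shows "hgp_distance H1 H2 r1 n1 r2 n2 \<le> enat (length Ps)"
proof -
  have slices: "(\<exists>q. P \<subseteq> {q}) \<or> (\<exists>r. P \<subseteq> hgp_X_row H1 H2 n1 r2 r)" if "P \<in> set Ps" for P
    using pieces that by blast
  let ?kerH1 = "f2_kernel {..<n1} {..<r1} (mat_row H1 n1)"
    and ?kerH2T = "f2_kernel {..<r2} {..<n2} (mat_col H2 r2)"
  consider (column) u where "u \<in> ?kerH1" "slice_parities (\<lambda>i j. Inl (i, j)) u {..<n2} e \<noteq> {}"
    | (row) w where "w \<in> ?kerH2T" "slice_parities (\<lambda>b a. Inr (a, b)) w {..<r1} e \<noteq> {}"
    using in_im_HXT_if_slice_parities_vanish[OF e(1)] e(2) by blast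
  then show ?thesis
  proof cases
    case column
    let ?y = "slice_parities (\<lambda>i j. Inl (i, j)) u {..<n2} e"
    obtain j0 where j0: "j0 \<in> ?y" using column(2) by blast
    then obtain i0 where "i0 \<in> u" using odd_card_imp_not_empty by (force simp: slice_parities_def)
    have "finite u" using column(1) finite_subset by (auto simp: f2_kernel_def)
    have "card ((\<lambda>j. Inl (i0, j)) ` ?y) = card ?y" by (simp add: card_image inj_on_def)
    also have "\<dots> \<le> length Ps"
      unfolding e_eq using \<open>finite u\<close> hgp_X_piece_slices(1)[OF slices]
      by (intro card_slice_parities_foldr_symd_le) auto
    finally show ?thesis
      by (rule hgp_distance_le[OF Inl_slice_parities_logical[OF e(1) column(1) \<open>i0 \<in> u\<close> j0]])
  next
    case row
    let ?x = "slice_parities (\<lambda>b a. Inr (a, b)) w {..<r1} e"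
    obtain a0 where a0: "a0 \<in> ?x" using row(2) by blast
    then obtain b0 where "b0 \<in> w" using odd_card_imp_not_empty by (force simp: slice_parities_def)
    have "finite w" using row(1) finite_subset by (auto simp: f2_kernel_def)
    have "card ((\<lambda>a. Inr (a, b0)) ` ?x) = card ?x" by (simp add: card_image inj_on_def)
    also have "\<dots> \<le> length Ps"
      unfolding e_eq using \<open>finite w\<close> hgp_X_piece_slices(2)[OF slices]
      by (intro card_slice_parities_foldr_symd_le) auto
    finally show ?thesis
      by (rule hgp_distance_le[OF Inr_slice_parities_logical[OF e(1) row(1) \<open>b0 \<in> w\<close> a0]])
  qed
qed

section \<open>Transposition\<close>

text \<open>\<open>H\<inverse>\<inverse>\<close> is the transpose of \<open>H\<close>. Transposing both seed matrices exchanges \<open>H\<^sub>X\<close> and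
  \<open>H\<^sub>Z\<close>, once bit-type and check-type qubits are swapped.\<close>
definition flip_qubit :: "qubit \<Rightarrow> qubit" where
  "flip_qubit = case_sum Inr Inl"

lemma flip_qubit_simps [simp]: "flip_qubit (Inl p) = Inr p" "flip_qubit (Inr p) = Inl p"
  by (simp_all add: flip_qubit_def)

lemma flip_qubit_flip_qubit [simp]: "flip_qubit (flip_qubit q) = q"
  by (cases q) simp_all

lemma inj_flip_qubit: "inj flip_qubit"
  by (metis injI flip_qubit_flip_qubit)

lemma image_flip_qubit_flip_qubit [simp]: "flip_qubit ` flip_qubit ` A = A"
  by (simp add: image_image)

lemma flip_qubit_in_image_iff: "flip_qubit q \<in> flip_qubit ` A \<longleftrightarrow> q \<in> A"
  using inj_flip_qubit by (simp add: inj_image_mem_iff)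

lemma image_flip_qubit_eq: "flip_qubit ` A = {q. flip_qubit q \<in> A}"
proof (rule set_eqI)
  fix q
  have "q \<in> flip_qubit ` A \<longleftrightarrow> flip_qubit (flip_qubit q) \<in> flip_qubit ` A" by simp
  also have "\<dots> \<longleftrightarrow> flip_qubit q \<in> A" by (rule flip_qubit_in_image_iff)
  finally show "q \<in> flip_qubit ` A \<longleftrightarrow> q \<in> {q. flip_qubit q \<in> A}" by simp
qed

lemma hgp_qubits_transpose: "hgp_qubits n1 r1 n2 r2 = flip_qubit ` hgp_qubits r1 n1 r2 n2"
  unfolding image_flip_qubit_eq
proof (rule set_eqI)
  show "q \<in> hgp_qubits n1 r1 n2 r2 \<longleftrightarrow> q \<in> {q. flip_qubit q \<in> hgp_qubits r1 n1 r2 n2}" for q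
    by (cases q) (auto simp: hgp_qubits_def)
qed

lemma hgp_X_row_transpose: "hgp_X_row H1\<inverse>\<inverse> H2\<inverse>\<inverse> r1 n2 r = flip_qubit ` hgp_Z_row H1 H2 r1 n2 r"
  unfolding image_flip_qubit_eq
proof (rule set_eqI)
  show "q \<in> hgp_X_row H1\<inverse>\<inverse> H2\<inverse>\<inverse> r1 n2 r \<longleftrightarrow> q \<in> {q. flip_qubit q \<in> hgp_Z_row H1 H2 r1 n2 r}" for q
    by (cases q) (auto simp: hgp_X_row_def hgp_Z_row_def split: prod.splits)
qed

lemma ker_HX_transpose_iff:
  "flip_qubit ` v \<in> ker_HX H1\<inverse>\<inverse> H2\<inverse>\<inverse> n1 r1 n2 r2 \<longleftrightarrow> v \<in> ker_HZ H1 H2 r1 n1 r2 n2"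
proof -
  have "ker_HX H1\<inverse>\<inverse> H2\<inverse>\<inverse> n1 r1 n2 r2 = f2_kernel (flip_qubit ` hgp_qubits r1 n1 r2 n2)
      (hgp_Z_rows n1 r2) (\<lambda>r. flip_qubit ` hgp_Z_row H1 H2 r1 n2 r)"
    unfolding ker_HX_def hgp_qubits_transpose[of n1 r1 n2 r2] hgp_X_row_transpose hgp_X_rows_def hgp_Z_rows_def ..
  then show ?thesis
    unfolding ker_HZ_def by (simp only: image_in_f2_kernel_iff[OF inj_flip_qubit])
qed

lemma im_HXT_transpose_iff:
  "flip_qubit ` v \<in> im_HXT H1\<inverse>\<inverse> H2\<inverse>\<inverse> n1 r1 n2 r2 \<longleftrightarrow> v \<in> im_HZT H1 H2 r1 n1 r2 n2"
proof -
  let ?G = "hgp_Z_row H1 H2 r1 n2 ` hgp_Z_rows n1 r2"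
  have G: "hgp_X_row H1\<inverse>\<inverse> H2\<inverse>\<inverse> r1 n2 ` hgp_X_rows n1 r2 = (`) flip_qubit ` ?G"
    by (simp add: hgp_X_row_transpose hgp_X_rows_def hgp_Z_rows_def image_image)
  have "flip_qubit ` v \<in> f2_span ((`) flip_qubit ` ?G) \<longleftrightarrow> v \<in> f2_span ?G"
  proof
    assume "flip_qubit ` v \<in> f2_span ((`) flip_qubit ` ?G)"
    then have "flip_qubit ` flip_qubit ` v \<in> f2_span ((`) flip_qubit ` (`) flip_qubit ` ?G)"
      by (rule image_in_f2_span[OF inj_flip_qubit])
    then show "v \<in> f2_span ?G" by (simp add: image_image)
  qed (rule image_in_f2_span[OF inj_flip_qubit])
  then show ?thesis unfolding im_HXT_def im_HZT_def G .
qed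

lemma ker_HZ_transpose_iff:
  "flip_qubit ` v \<in> ker_HZ H1\<inverse>\<inverse> H2\<inverse>\<inverse> n1 r1 n2 r2 \<longleftrightarrow> v \<in> ker_HX H1 H2 r1 n1 r2 n2"
  using ker_HX_transpose_iff[of "flip_qubit ` v" "H1\<inverse>\<inverse>" "H2\<inverse>\<inverse>" r1 n1 r2 n2] by simp

lemma im_HZT_transpose_iff:
  "flip_qubit ` v \<in> im_HZT H1\<inverse>\<inverse> H2\<inverse>\<inverse> n1 r1 n2 r2 \<longleftrightarrow> v \<in> im_HXT H1 H2 r1 n1 r2 n2"
  using im_HXT_transpose_iff[of "flip_qubit ` v" "H1\<inverse>\<inverse>" "H2\<inverse>\<inverse>" r1 n1 r2 n2] by simp

lemma hgp_logicals_transpose_iff: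
  "flip_qubit ` v \<in> hgp_logicals H1\<inverse>\<inverse> H2\<inverse>\<inverse> n1 r1 n2 r2 \<longleftrightarrow> v \<in> hgp_logicals H1 H2 r1 n1 r2 n2"
  unfolding hgp_logicals_def
  by (simp add: ker_HX_transpose_iff ker_HZ_transpose_iff im_HXT_transpose_iff im_HZT_transpose_iff) blast

lemma mem_image_image_flip_qubit_iff: "L \<in> (`) flip_qubit ` S \<longleftrightarrow> flip_qubit ` L \<in> S"
proof
  assume "L \<in> (`) flip_qubit ` S"
  then show "flip_qubit ` L \<in> S" by auto
next
  assume "flip_qubit ` L \<in> S"
  then have "flip_qubit ` flip_qubit ` L \<in> (`) flip_qubit ` S" by (rule imageI)
  then show "L \<in> (`) flip_qubit ` S" by simp
qed

lemma hgp_distance_transpose: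
  "hgp_distance H1\<inverse>\<inverse> H2\<inverse>\<inverse> n1 r1 n2 r2 = hgp_distance H1 H2 r1 n1 r2 n2"
proof -
  have "hgp_logicals H1\<inverse>\<inverse> H2\<inverse>\<inverse> n1 r1 n2 r2 = (`) flip_qubit ` hgp_logicals H1 H2 r1 n1 r2 n2"
    using hgp_logicals_transpose_iff[of "flip_qubit ` _" H1 H2]
    by (auto simp: mem_image_image_flip_qubit_iff)
  moreover have "card (flip_qubit ` L) = card L" for L
    using inj_flip_qubit by (simp add: card_image inj_on_subset)
  ultimately show ?thesis
    unfolding hgp_distance_def by (simp add: image_image)
qed

lemma hgp_distance_le_Z_pieces:
  assumes f: "f \<in> ker_HX H1 H2 r1 n1 r2 n2" "f \<notin> im_HZT H1 H2 r1 n1 r2 n2"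
    and pieces: "\<forall>P\<in>set Ps. (\<exists>q. P \<subseteq> {q}) \<or> (\<exists>r\<in>hgp_Z_rows n1 r2. P \<subseteq> hgp_Z_row H1 H2 r1 n2 r)"
    and f_eq: "f = foldr symd Ps {}"
  shows "hgp_distance H1 H2 r1 n1 r2 n2 \<le> enat (length Ps)"
proof -
  have "hgp_distance H1\<inverse>\<inverse> H2\<inverse>\<inverse> n1 r1 n2 r2 \<le> enat (length (map ((`) flip_qubit) Ps))"
  proof (rule hgp_distance_le_X_pieces)
    show "flip_qubit ` f \<in> ker_HZ H1\<inverse>\<inverse> H2\<inverse>\<inverse> n1 r1 n2 r2"
      using ker_HZ_transpose_iff f(1) by blast
    show "flip_qubit ` f \<notin> im_HXT H1\<inverse>\<inverse> H2\<inverse>\<inverse> n1 r1 n2 r2"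
      using im_HXT_transpose_iff f(2) by blast
    show "flip_qubit ` f = foldr symd (map ((`) flip_qubit) Ps) {}"
      unfolding f_eq by (induction Ps) (simp_all add: image_symd[OF inj_flip_qubit])
    show "\<forall>P\<in>set (map ((`) flip_qubit) Ps). (\<exists>q. P \<subseteq> {q}) \<or>
        (\<exists>r\<in>hgp_X_rows n1 r2. P \<subseteq> hgp_X_row H1\<inverse>\<inverse> H2\<inverse>\<inverse> r1 n2 r)"
    proof
      fix P' assume "P' \<in> set (map ((`) flip_qubit) Ps)"
      then obtain P where P: "P \<in> set Ps" "P' = flip_qubit ` P" by auto
      from pieces P(1) consider (single) q where "P \<subseteq> {q}"
        | (row) r where "r \<in> hgp_Z_rows n1 r2" "P \<subseteq> hgp_Z_row H1 H2 r1 n2 r"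
        by blast
      then show "(\<exists>q. P' \<subseteq> {q}) \<or> (\<exists>r\<in>hgp_X_rows n1 r2. P' \<subseteq> hgp_X_row H1\<inverse>\<inverse> H2\<inverse>\<inverse> r1 n2 r)"
      proof cases
        case single
        then have "P' \<subseteq> {flip_qubit q}" using P(2) by auto
        then show ?thesis by blast
      next
        case row
        then have "P' \<subseteq> hgp_X_row H1\<inverse>\<inverse> H2\<inverse>\<inverse> r1 n2 r" using P(2) by (auto simp: hgp_X_row_transpose)
        then show ?thesis using row(1) by (auto simp: hgp_X_rows_def hgp_Z_rows_def)
      qed
    qed
  qed
  then show ?thesis by (simp add: hgp_distance_transpose)
qed

section \<open>Faults\<close>

lemma fault_error_eq: "fault_error fs = (foldr symd (map fst fs) {}, foldr symd (map snd fs) {})"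
  by (induction fs) (simp_all add: fault_error_def pauli_mult_def)

lemma single_qubit_faults:
  assumes "q \<in> hgp_qubits r1 n1 r2 n2"
  shows "({q}, {}) \<in> single_faults H1 H2 r1 n1 r2 n2 ordX ordZ"
    and "({}, {q}) \<in> single_faults H1 H2 r1 n1 r2 n2 ordX ordZ"
  using assms unfolding single_faults_def by blast+

lemma fault_error_single_qubits:
  assumes "distinct xs"
  shows "fault_error (map (\<lambda>q. ({q}, {})) xs) = (set xs, {})"
    and "fault_error (map (\<lambda>q. ({}, {q})) xs) = ({}, set xs)"
  using assms by (induction xs) (auto simp: fault_error_def pauli_mult_def)

lemma single_fault_parts:
  assumes orders: "valid_orders H1 H2 r1 n1 r2 n2 ordX ordZ"
    and p: "p \<in> single_faults H1 H2 r1 n1 r2 n2 ordX ordZ"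
  shows "(\<exists>q. fst p \<subseteq> {q}) \<or> (\<exists>r\<in>hgp_X_rows r1 n2. fst p \<subseteq> hgp_X_row H1 H2 n1 r2 r)"
    and "(\<exists>q. snd p \<subseteq> {q}) \<or> (\<exists>r\<in>hgp_Z_rows n1 r2. snd p \<subseteq> hgp_Z_row H1 H2 r1 n2 r)"
proof -
  have X: "set (drop k (ordX r)) \<subseteq> hgp_X_row H1 H2 n1 r2 r" if "r \<in> hgp_X_rows r1 n2" for r k
    using orders that set_drop_subset[of k "ordX r"] by (auto simp: valid_orders_def)
  have Z: "set (drop k (ordZ r)) \<subseteq> hgp_Z_row H1 H2 r1 n2 r" if "r \<in> hgp_Z_rows n1 r2" for r k
    using orders that set_drop_subset[of k "ordZ r"] by (auto simp: valid_orders_def)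
  from p consider (X_qubit) q where "p = ({q}, {})" | (Z_qubit) q where "p = ({}, {q})"
    | (Y_qubit) q where "p = ({q}, {q})"
    | (X_ancilla) r k where "r \<in> hgp_X_rows r1 n2" "p = (set (drop k (ordX r)), {})"
    | (Z_ancilla) r k where "r \<in> hgp_Z_rows n1 r2" "p = ({}, set (drop k (ordZ r)))"
    unfolding single_faults_def by blast
  note kinds = this
  show "(\<exists>q. fst p \<subseteq> {q}) \<or> (\<exists>r\<in>hgp_X_rows r1 n2. fst p \<subseteq> hgp_X_row H1 H2 n1 r2 r)"
    using kinds
  proof cases
    case (X_ancilla r k)
    then show ?thesis using X[OF X_ancilla(1), of k] by auto
  qed auto
  show "(\<exists>q. snd p \<subseteq> {q}) \<or> (\<exists>r\<in>hgp_Z_rows n1 r2. snd p \<subseteq> hgp_Z_row H1 H2 r1 n2 r)"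
    using kinds
  proof cases
    case (Z_ancilla r k)
    then show ?thesis using Z[OF Z_ancilla(1), of k] by auto
  qed auto
qed

lemma effective_distance_le:
  "set fs \<subseteq> single_faults H1 H2 r1 n1 r2 n2 ordX ordZ \<Longrightarrow>
    undetectable_logical H1 H2 r1 n1 r2 n2 (fault_error fs) \<Longrightarrow>
    effective_distance H1 H2 r1 n1 r2 n2 ordX ordZ \<le> enat (length fs)"
  unfolding effective_distance_def by (rule INF_lower) simp

lemma effective_distance_le_card_logical:
  assumes v: "v \<in> hgp_logicals H1 H2 r1 n1 r2 n2"
  shows "effective_distance H1 H2 r1 n1 r2 n2 ordX ordZ \<le> enat (card v)"
proof -
  have vQ: "v \<subseteq> hgp_qubits r1 n1 r2 n2"
    using v by (auto simp: hgp_logicals_def ker_HX_def ker_HZ_def f2_kernel_def)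
  then obtain xs where xs: "set xs = v" "distinct xs"
    using finite_distinct_list[OF finite_subset[OF vQ finite_hgp_qubits]] by blast
  then have card: "card v = length xs" using distinct_card by blast
  have empty: "{} \<in> ker_HX H1 H2 r1 n1 r2 n2" "{} \<in> ker_HZ H1 H2 r1 n1 r2 n2"
    by (simp_all add: ker_HX_def ker_HZ_def f2_kernel_def)
  from v consider "v \<in> ker_HZ H1 H2 r1 n1 r2 n2" "v \<notin> im_HXT H1 H2 r1 n1 r2 n2"
    | "v \<in> ker_HX H1 H2 r1 n1 r2 n2" "v \<notin> im_HZT H1 H2 r1 n1 r2 n2"
    unfolding hgp_logicals_def by blast
  then show ?thesis
  proof cases
    case 1
    have "set (map (\<lambda>q. ({q}, {})) xs) \<subseteq> single_faults H1 H2 r1 n1 r2 n2 ordX ordZ"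
      using vQ xs(1) by (auto intro!: single_qubit_faults(1))
    moreover have "undetectable_logical H1 H2 r1 n1 r2 n2 (fault_error (map (\<lambda>q. ({q}, {})) xs))"
      using 1 xs empty by (simp add: fault_error_single_qubits undetectable_logical_def)
    ultimately show ?thesis using effective_distance_le card by (metis length_map)
  next
    case 2
    have "set (map (\<lambda>q. ({}, {q})) xs) \<subseteq> single_faults H1 H2 r1 n1 r2 n2 ordX ordZ"
      using vQ xs(1) by (auto intro!: single_qubit_faults(2))
    moreover have "undetectable_logical H1 H2 r1 n1 r2 n2 (fault_error (map (\<lambda>q. ({}, {q})) xs))"
      using 2 xs empty by (simp add: fault_error_single_qubits undetectable_logical_def)
    ultimately show ?thesis using effective_distance_le card by (metis length_map)
  qed
qed

lemma hgp_distance_le_length_faults: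
  assumes orders: "valid_orders H1 H2 r1 n1 r2 n2 ordX ordZ"
    and fs: "set fs \<subseteq> single_faults H1 H2 r1 n1 r2 n2 ordX ordZ"
    and logical: "undetectable_logical H1 H2 r1 n1 r2 n2 (fault_error fs)"
  shows "hgp_distance H1 H2 r1 n1 r2 n2 \<le> enat (length fs)"
proof (cases "fst (fault_error fs) \<in> im_HXT H1 H2 r1 n1 r2 n2")
  case False
  then have "hgp_distance H1 H2 r1 n1 r2 n2 \<le> enat (length (map fst fs))"
    using logical single_fault_parts(1)[OF orders] fs
    by (intro hgp_distance_le_X_pieces[where e = "fst (fault_error fs)"])
      (auto simp: undetectable_logical_def fault_error_eq)
  then show ?thesis by simp
next
  case True
  then have "hgp_distance H1 H2 r1 n1 r2 n2 \<le> enat (length (map snd fs))"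
    using logical single_fault_parts(2)[OF orders] fs
    by (intro hgp_distance_le_Z_pieces[where f = "snd (fault_error fs)"])
      (auto simp: undetectable_logical_def fault_error_eq)
  then show ?thesis by simp
qed

theorem theorem2:
  fixes H1 H2 :: "nat \<Rightarrow> nat \<Rightarrow> bool" and r1 n1 r2 n2 :: nat
    and ordX ordZ :: "nat \<times> nat \<Rightarrow> qubit list"
  assumes "valid_orders H1 H2 r1 n1 r2 n2 ordX ordZ"
  shows "effective_distance H1 H2 r1 n1 r2 n2 ordX ordZ = hgp_distance H1 H2 r1 n1 r2 n2"
proof (rule antisym)
  show "effective_distance H1 H2 r1 n1 r2 n2 ordX ordZ \<le> hgp_distance H1 H2 r1 n1 r2 n2"
    unfolding hgp_distance_def by (rule INF_greatest) (rule effective_distance_le_card_logical)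
  show "hgp_distance H1 H2 r1 n1 r2 n2 \<le> effective_distance H1 H2 r1 n1 r2 n2 ordX ordZ"
    unfolding effective_distance_def
    by (rule INF_greatest) (use hgp_distance_le_length_faults[OF assms] in blast)
qed

end
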